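(* Let $r>0$ be a fixed real number. If $P$ is a finite poset having an interval representation in which every interval is closed and has length $0$ or $r$, then $\dim(P) \le 3$.
   Context: Posets are finite and reflexive. An interval representation of a poset $P$ assigns to each element $x$ a closed bounded interval $[\ell(x), r(x)]$ (possibly degenerate, of length $0$) such that for distinct $x,y$, $x<y$ in $P$ if and only if $r(x)<\ell(y)$. The dimension $\dim(P)$ is the minimum number of linear extensions of $P$ whose intersection is $P$. *)

theory Defs
  imports Complex_Main
begin

definition partial_order_on' :: "'a set \<Rightarrow> ('a \<Rightarrow> 'a \<Rightarrow> bool) \<Rightarrow> bool" where
  "partial_order_on' X le \<longleftrightarrow>
     (\<forall>x\<in>X. le x x) \<and>
     (\<forall>x\<in>X. \<forall>y\<in>X. le x y \<and> le y x \<longrightarrow> x = y) \<and>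
     (\<forall>x\<in>X. \<forall>y\<in>X. \<forall>z\<in>X. le x y \<and> le y z \<longrightarrow> le x z)"

definition finite_poset :: "'a set \<Rightarrow> ('a \<Rightarrow> 'a \<Rightarrow> bool) \<Rightarrow> bool" where
  "finite_poset X le \<longleftrightarrow> finite X \<and> partial_order_on' X le"

definition linear_extension :: "'a set \<Rightarrow> ('a \<Rightarrow> 'a \<Rightarrow> bool) \<Rightarrow> ('a \<Rightarrow> 'a \<Rightarrow> bool) \<Rightarrow> bool" where
  "linear_extension X le L \<longleftrightarrow>
     partial_order_on' X L \<and>
     (\<forall>x\<in>X. \<forall>y\<in>X. L x y \<or> L y x) \<and>
     (\<forall>x\<in>X. \<forall>y\<in>X. le x y \<longrightarrow> L x y)"

definition realizer :: "'a set \<Rightarrow> ('a \<Rightarrow> 'a \<Rightarrow> bool) \<Rightarrow> ('a \<Rightarrow> 'a \<Rightarrow> bool) set \<Rightarrow> bool" where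
  "realizer X le R \<longleftrightarrow>
     R \<noteq> {} \<and> (\<forall>L\<in>R. linear_extension X le L) \<and>
     (\<forall>x\<in>X. \<forall>y\<in>X. le x y \<longleftrightarrow> (\<forall>L\<in>R. L x y))"

definition poset_dim :: "'a set \<Rightarrow> ('a \<Rightarrow> 'a \<Rightarrow> bool) \<Rightarrow> nat" where
  "poset_dim X le = (LEAST n. \<exists>R. finite R \<and> card R = n \<and> realizer X le R)"

definition interval_representation ::
  "'a set \<Rightarrow> ('a \<Rightarrow> 'a \<Rightarrow> bool) \<Rightarrow> ('a \<Rightarrow> real) \<Rightarrow> ('a \<Rightarrow> real) \<Rightarrow> bool" where
  "interval_representation X le lft rgt \<longleftrightarrow>
     (\<forall>x\<in>X. lft x \<le> rgt x) \<and>
     (\<forall>x\<in>X. \<forall>y\<in>X. x \<noteq> y \<longrightarrow> (le x y \<longleftrightarrow> rgt x < lft y))"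

end

theory Submission
  imports Defs "HOL-Library.Product_Lexorder"
begin

text \<open>Cut the line into blocks [k\<rho>, (k+1)\<rho>). Two linear extensions order the elements by an
endpoint of their intervals: long intervals in blocks of one parity by their right end, the
others by their left end, with the parities swapped in the second extension. Two overlapping long
intervals lie in the same block or in adjacent blocks of opposite parity. In the latter case, and
whenever a point is involved, these two extensions order the pair oppositely; long intervals of
the same block are ordered by their left ends in both, and a third extension reverses that order
by collapsing each block onto the grid point it contains.\<close>

lemma linear_extension_of_key:
  fixes K :: "'a \<Rightarrow> 'b::linorder"
  assumes "inj_on K X"
    and "\<And>x y. x \<in> X \<Longrightarrow> y \<in> X \<Longrightarrow> x \<noteq> y \<Longrightarrow> le x y \<Longrightarrow> K x < K y"
  shows "linear_extension X le (\<lambda>x y. K x \<le> K y)"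
  unfolding linear_extension_def partial_order_on'_def
proof (intro conjI ballI impI)
  fix x y assume "x \<in> X" "y \<in> X" "le x y"
  then show "K x \<le> K y" using assms(2) by (cases "x = y") (auto intro: less_imp_le)
qed (use assms(1) in \<open>auto simp: inj_on_def intro: order_trans\<close>)

lemma realizer_if_incomparables_reversed:
  assumes "partial_order_on' X le" "R \<noteq> {}" "\<forall>L\<in>R. linear_extension X le L"
    and "\<And>x y. x \<in> X \<Longrightarrow> y \<in> X \<Longrightarrow> \<not> le x y \<Longrightarrow> \<not> le y x \<Longrightarrow> \<exists>L\<in>R. \<not> L x y"
  shows "realizer X le R"
  unfolding realizer_def
proof (intro conjI ballI iffI)
  fix x y assume xy: "x \<in> X" "y \<in> X" and all: "\<forall>L\<in>R. L x y"
  show "le x y"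
  proof (rule ccontr)
    assume not_le: "\<not> le x y"
    show False
    proof (cases "le y x")
      case True
      obtain L where "L \<in> R" using assms(2) by blast
      then have "L y x" "L x y" "linear_extension X le L"
        using True all assms(3) xy unfolding linear_extension_def by auto
      then have "x = y" using xy unfolding linear_extension_def partial_order_on'_def by blast
      then show False using not_le xy assms(1) unfolding partial_order_on'_def by blast
    next
      case False
      then show False using assms(4)[OF xy not_le] all by blast
    qed
  qed
qed (use assms(2,3) in \<open>auto simp: linear_extension_def\<close>)

lemma poset_dim_le_card_realizer:
  assumes "realizer X le R" "finite R"
  shows "poset_dim X le \<le> card R"
  unfolding poset_dim_def using assms by (intro Least_le) blast

lemma interval_key_linear_extension:
  fixes K :: "'a \<Rightarrow> real \<times> 'b::linorder"
  assumes "interval_representation X le lft rgt" "inj_on K X"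
    and "\<And>x. x \<in> X \<Longrightarrow> lft x \<le> fst (K x) \<and> fst (K x) \<le> rgt x"
  shows "linear_extension X le (\<lambda>x y. K x \<le> K y)"
proof (rule linear_extension_of_key[OF assms(2)])
  fix x y assume "x \<in> X" "y \<in> X" "x \<noteq> y" "le x y"
  then have "rgt x < lft y" using assms(1) unfolding interval_representation_def by blast
  then have "fst (K x) < fst (K y)" using assms(3)[OF \<open>x \<in> X\<close>] assms(3)[OF \<open>y \<in> X\<close>] by linarith
  then show "K x < K y" by (simp add: less_prod_def)
qed

locale unit_point_representation =
  fixes X :: "'a set" and le :: "'a \<Rightarrow> 'a \<Rightarrow> bool" and lft rgt :: "'a \<Rightarrow> real"
    and \<rho> :: real and idx :: "'a \<Rightarrow> nat"
  assumes rho_pos: "\<rho> > 0"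
    and partial_order: "partial_order_on' X le"
    and representation: "interval_representation X le lft rgt"
    and lengths: "\<forall>x\<in>X. rgt x - lft x = 0 \<or> rgt x - lft x = \<rho>"
    and inj_idx: "inj_on idx X"
begin

definition long :: "'a \<Rightarrow> bool" where
  "long x \<longleftrightarrow> rgt x - lft x = \<rho>"

definition block :: "'a \<Rightarrow> int" where
  "block x = \<lfloor>lft x / \<rho>\<rfloor>"

text \<open>A long interval of block c contains the grid point (c + 1) * \<rho>. Long intervals of a
common block are all placed there, ordered by decreasing left end: the reverse of their order
under end_key True.\<close>

definition grid_key :: "'a \<Rightarrow> real \<times> real \<times> int" where
  "grid_key x = (if long x then (of_int (block x) + 1) * \<rho> else lft x, - lft x, - int (idx x))"

text \<open>Long intervals whose block has parity p are placed at their right end, the others at their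
left end; at a common position, right-placed intervals come after points and left-placed ones
before them.\<close>

definition end_key :: "bool \<Rightarrow> 'a \<Rightarrow> real \<times> int \<times> int" where
  "end_key p x =
     (if long x \<and> even (block x) = p then rgt x else lft x,
      if long x then (if even (block x) = p then 1 else -1) else 0,
      if p then int (idx x) else - int (idx x))"

lemma rgt_point: "x \<in> X \<Longrightarrow> \<not> long x \<Longrightarrow> rgt x = lft x"
  using lengths unfolding long_def by force

lemma rgt_long: "long x \<Longrightarrow> rgt x = lft x + \<rho>"
  unfolding long_def by simp

lemma block_bounds: "of_int (block x) * \<rho> \<le> lft x" "lft x < (of_int (block x) + 1) * \<rho>"
proof -
  have "of_int (block x) \<le> lft x / \<rho>" "lft x / \<rho> < of_int (block x) + 1"
    unfolding block_def by linarith+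
  then show "of_int (block x) * \<rho> \<le> lft x" "lft x < (of_int (block x) + 1) * \<rho>"
    using rho_pos by (simp_all add: pos_le_divide_eq pos_divide_less_eq)
qed

lemma overlapping_long_blocks_parity:
  assumes "long x" "long y" "lft y \<le> rgt x" "lft x \<le> rgt y" "block x \<noteq> block y"
  shows "even (block x) \<noteq> even (block y)"
proof -
  have "lft x / \<rho> \<le> lft y / \<rho> + 1" "lft y / \<rho> \<le> lft x / \<rho> + 1"
    using assms(1-4) rho_pos by (simp_all add: rgt_long divide_simps)
  then have "block x = block y + 1 \<or> block y = block x + 1"
    using assms(5) unfolding block_def by linarith
  then show ?thesis by auto
qed

lemma grid_key_in_interval: "x \<in> X \<Longrightarrow> lft x \<le> fst (grid_key x) \<and> fst (grid_key x) \<le> rgt x"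
  using block_bounds[of x] rgt_long[of x] rgt_point[of x] unfolding grid_key_def
  by (auto simp: algebra_simps)

lemma end_key_in_interval: "x \<in> X \<Longrightarrow> lft x \<le> fst (end_key p x) \<and> fst (end_key p x) \<le> rgt x"
  using representation unfolding interval_representation_def end_key_def by auto

lemma inj_grid_key: "inj_on grid_key X"
  using inj_idx unfolding inj_on_def grid_key_def by auto

lemma inj_end_key: "inj_on (end_key p) X"
  using inj_idx unfolding inj_on_def end_key_def by auto

lemma linear_extension_grid_key: "linear_extension X le (\<lambda>x y. grid_key x \<le> grid_key y)"
  by (rule interval_key_linear_extension[OF representation inj_grid_key grid_key_in_interval])

lemma linear_extension_end_key: "linear_extension X le (\<lambda>x y. end_key p x \<le> end_key p y)"
  by (rule interval_key_linear_extension[OF representation inj_end_key end_key_in_interval])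

lemma grid_key_reverses_end_key:
  assumes "x \<in> X" "y \<in> X" "x \<noteq> y" "long x" "long y" "block x = block y"
  shows "grid_key y < grid_key x \<or> end_key True y < end_key True x"
proof -
  have "idx x \<noteq> idx y" using inj_idx assms(1-3) unfolding inj_on_def by blast
  then show ?thesis
    using assms(4-6) unfolding grid_key_def end_key_def by (auto simp: rgt_long less_prod_def')
qed

lemma end_keys_disagree:
  assumes "x \<in> X" "y \<in> X" "x \<noteq> y" "lft y \<le> rgt x" "lft x \<le> rgt y"
    and "\<not> (long x \<and> long y \<and> block x = block y)"
  shows "end_key True y < end_key True x \<or> end_key False y < end_key False x"
proof -
  have "idx x \<noteq> idx y" using inj_idx assms(1-3) unfolding inj_on_def by blast
  consider "long x" "long y" | "long x" "\<not> long y" | "\<not> long x" "long y" | "\<not> long x" "\<not> long y"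
    by blast
  then show ?thesis
  proof cases
    case 1
    then have "even (block x) \<noteq> even (block y)"
      using assms(4-6) overlapping_long_blocks_parity by blast
    then show ?thesis using 1 assms(4,5) rho_pos
      unfolding end_key_def by (auto simp: rgt_long less_prod_def')
  next
    case 2
    then show ?thesis using assms(4,5) rho_pos rgt_point[OF assms(2)]
      unfolding end_key_def by (auto simp: rgt_long less_prod_def')
  next
    case 3
    then show ?thesis using assms(4,5) rho_pos rgt_point[OF assms(1)]
      unfolding end_key_def by (auto simp: rgt_long less_prod_def')
  next
    case 4
    then show ?thesis
      using assms(4,5) \<open>idx x \<noteq> idx y\<close> rgt_point[OF assms(1)] rgt_point[OF assms(2)]
      unfolding end_key_def by (auto simp: less_prod_def')
  qed
qed

definition key_realizer :: "('a \<Rightarrow> 'a \<Rightarrow> bool) set" where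
  "key_realizer =
     {\<lambda>x y. grid_key x \<le> grid_key y, \<lambda>x y. end_key True x \<le> end_key True y,
      \<lambda>x y. end_key False x \<le> end_key False y}"

lemma realizer_key_realizer: "realizer X le key_realizer"
proof (rule realizer_if_incomparables_reversed[OF partial_order])
  show "key_realizer \<noteq> {}" unfolding key_realizer_def by blast
  show "\<forall>L\<in>key_realizer. linear_extension X le L"
    unfolding key_realizer_def using linear_extension_grid_key linear_extension_end_key by blast
next
  fix x y assume xy: "x \<in> X" "y \<in> X" and incomparable: "\<not> le x y" "\<not> le y x"
  then have "x \<noteq> y" using partial_order unfolding partial_order_on'_def by blast
  moreover have "lft y \<le> rgt x" "lft x \<le> rgt y"
    using representation xy incomparable \<open>x \<noteq> y\<close> unfolding interval_representation_def by force+
  ultimately have "grid_key y < grid_key x \<or> end_key True y < end_key True x \<or>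
      end_key False y < end_key False x"
    using grid_key_reverses_end_key end_keys_disagree xy by blast
  then show "\<exists>L\<in>key_realizer. \<not> L x y" unfolding key_realizer_def by auto
qed

lemma poset_dim_le_3: "poset_dim X le \<le> 3"
proof -
  have "finite key_realizer" "card key_realizer \<le> 3"
    unfolding key_realizer_def by (simp_all add: card_insert_if)
  then show ?thesis using poset_dim_le_card_realizer[OF realizer_key_realizer] by fastforce
qed

end

theorem mainTheorem7:
  fixes X :: "'a set" and le :: "'a \<Rightarrow> 'a \<Rightarrow> bool"
    and \<rho> :: real and lft rgt :: "'a \<Rightarrow> real"
  assumes "\<rho> > 0"
    and "finite_poset X le"
    and "interval_representation X le lft rgt"
    and "\<forall>x\<in>X. rgt x - lft x = 0 \<or> rgt x - lft x = \<rho>"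
  shows "poset_dim X le \<le> 3"
proof -
  obtain idx :: "'a \<Rightarrow> nat" where "inj_on idx X"
    using assms(2) finite_imp_inj_to_nat_seg unfolding finite_poset_def by blast
  with assms interpret unit_point_representation X le lft rgt \<rho> idx
    by unfold_locales (auto simp: finite_poset_def)
  show ?thesis by (rule poset_dim_le_3)
qed

end
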